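(* Let $A$ be a commutative semiring and $a,b\in A$. Let $R(a,b)=\{(ax+by+z,\ bx+ay+z):x,y,z\in A\}$. Then $R(a,b)_+$ is a congruence on $A$, and $R(a,b)\subseteq\rho\subseteq R(a,b)_+\subseteq\rho_+$, where $\rho=\{(a,b)\}^{c}$.
   Context: Semirings are commutative with $0$ and $1\neq0$, $0a=0$; congruences are equivalence relations compatible with $+,\cdot$. For a relation $R$, $R_+=\{(u,v)\in A\times A:(u+c,v+c)\in R$ for some $c\in A\}$; $\{(a,b)\}^{c}$ is the congruence generated by the pair $(a,b)$. *)

theory Defs
  imports Main
begin

definition is_congruence :: "('a::comm_semiring_1 \<times> 'a) set \<Rightarrow> bool" where
  "is_congruence R \<longleftrightarrow> equiv UNIV R \<and>
     (\<forall>a b c d. (a, b) \<in> R \<longrightarrow> (c, d) \<in> R \<longrightarrow> (a + c, b + d) \<in> R \<and> (a * c, b * d) \<in> R)"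

definition gen_congruence :: "('a::comm_semiring_1 \<times> 'a) set \<Rightarrow> ('a \<times> 'a) set" where
  "gen_congruence S = \<Inter> {R. is_congruence R \<and> S \<subseteq> R}"

definition plus_closure :: "('a::comm_semiring_1 \<times> 'a) set \<Rightarrow> ('a \<times> 'a) set" where
  "plus_closure R = {(u, v). \<exists>c. (u + c, v + c) \<in> R}"

definition Rab :: "'a::comm_semiring_1 \<Rightarrow> 'a \<Rightarrow> ('a \<times> 'a) set" where
  "Rab a b = {(a * x + b * y + z, b * x + a * y + z) | x y z. True}"

end

theory Submission
  imports Defs
begin

text \<open>\<open>R(a,b)\<close> is a reflexive, symmetric subsemimodule of \<open>A \<times> A\<close>; for any such relation
  \<open>R\<^sub>+\<close> is a congruence, since adding the witnesses \<open>c\<close>, \<open>d\<close> of \<open>(u,v), (v,w) \<in> R\<^sub>+\<close> cancels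
  \<open>v\<close> and multiplicativity reduces to scalar multiplication and transitivity. Every
  congruence containing \<open>(a,b)\<close> contains \<open>R(a,b)\<close>, while \<open>(a,b) \<in> R(a,b) \<subseteq> R(a,b)\<^sub>+\<close>;
  minimality of \<open>\<rho>\<close> and monotonicity of \<open>(\<cdot>)\<^sub>+\<close> give the inclusions.\<close>

lemma congruence_refl: "is_congruence R \<Longrightarrow> (u, u) \<in> R"
  unfolding is_congruence_def equiv_def by (auto dest: refl_onD)

lemma congruence_sym: "is_congruence R \<Longrightarrow> (u, v) \<in> R \<Longrightarrow> (v, u) \<in> R"
  unfolding is_congruence_def equiv_def by (auto dest: symD)

lemma congruence_add:
  "is_congruence R \<Longrightarrow> (u, v) \<in> R \<Longrightarrow> (u', v') \<in> R \<Longrightarrow> (u + u', v + v') \<in> R"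
  unfolding is_congruence_def by blast

lemma congruence_mult:
  "is_congruence R \<Longrightarrow> (u, v) \<in> R \<Longrightarrow> (u', v') \<in> R \<Longrightarrow> (u * u', v * v') \<in> R"
  unfolding is_congruence_def by blast

lemma gen_congruence_least: "is_congruence R \<Longrightarrow> S \<subseteq> R \<Longrightarrow> gen_congruence S \<subseteq> R"
  unfolding gen_congruence_def by blast

lemma subset_gen_congruenceI:
  "(\<And>R. is_congruence R \<Longrightarrow> S \<subseteq> R \<Longrightarrow> T \<subseteq> R) \<Longrightarrow> T \<subseteq> gen_congruence S"
  unfolding gen_congruence_def by blast

lemma plus_closureI: "(u + c, v + c) \<in> R \<Longrightarrow> (u, v) \<in> plus_closure R"
  unfolding plus_closure_def by blast

lemma plus_closureE:
  assumes "(u, v) \<in> plus_closure R"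
  obtains c where "(u + c, v + c) \<in> R"
  using assms unfolding plus_closure_def by blast

lemma subset_plus_closure: "R \<subseteq> plus_closure R"
  by (auto intro: plus_closureI[where c = 0])

lemma plus_closure_mono: "R \<subseteq> S \<Longrightarrow> plus_closure R \<subseteq> plus_closure S"
  unfolding plus_closure_def by blast

lemma is_congruence_plus_closure:
  fixes R :: "('a::comm_semiring_1 \<times> 'a) set"
  assumes refl: "\<And>u. (u, u) \<in> R"
    and sym: "\<And>u v. (u, v) \<in> R \<Longrightarrow> (v, u) \<in> R"
    and add: "\<And>u v u' v'. (u, v) \<in> R \<Longrightarrow> (u', v') \<in> R \<Longrightarrow> (u + u', v + v') \<in> R"
    and smult: "\<And>t u v. (u, v) \<in> R \<Longrightarrow> (t * u, t * v) \<in> R"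
  shows "is_congruence (plus_closure R)"
proof -
  let ?P = "plus_closure R"
  have trans: "(u, w) \<in> ?P" if "(u, v) \<in> ?P" "(v, w) \<in> ?P" for u v w
  proof -
    obtain c where c: "(u + c, v + c) \<in> R" using \<open>(u, v) \<in> ?P\<close> by (rule plus_closureE)
    obtain d where d: "(v + d, w + d) \<in> R" using \<open>(v, w) \<in> ?P\<close> by (rule plus_closureE)
    have "(u + (c + v + d), w + (c + v + d)) \<in> R"
      using add[OF c d] by (simp add: ac_simps)
    then show ?thesis by (rule plus_closureI)
  qed
  have plus: "(u + u', v + v') \<in> ?P" if "(u, v) \<in> ?P" "(u', v') \<in> ?P" for u v u' v'
  proof -
    obtain c where c: "(u + c, v + c) \<in> R" using \<open>(u, v) \<in> ?P\<close> by (rule plus_closureE)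
    obtain d where d: "(u' + d, v' + d) \<in> R" using \<open>(u', v') \<in> ?P\<close> by (rule plus_closureE)
    have "(u + u' + (c + d), v + v' + (c + d)) \<in> R"
      using add[OF c d] by (simp add: ac_simps)
    then show ?thesis by (rule plus_closureI)
  qed
  have scalar: "(t * u, t * v) \<in> ?P" if uv: "(u, v) \<in> ?P" for t u v
  proof -
    obtain c where "(u + c, v + c) \<in> R" using uv by (rule plus_closureE)
    then have "(t * u + t * c, t * v + t * c) \<in> R"
      using smult[of "u + c" "v + c" t] by (simp add: distrib_left)
    then show ?thesis by (rule plus_closureI)
  qed
  have times: "(u * u', v * v') \<in> ?P" if "(u, v) \<in> ?P" "(u', v') \<in> ?P" for u v u' v'
  proof -
    have "(u * u', v * u') \<in> ?P"
      using scalar[OF that(1), of u'] by (simp add: mult.commute)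
    moreover have "(v * u', v * v') \<in> ?P"
      using scalar[OF that(2), of v] .
    ultimately show ?thesis by (rule trans)
  qed
  have "refl ?P"
    using subset_plus_closure refl by (auto intro: refl_onI)
  moreover have "sym ?P"
    by (rule symI) (auto simp: plus_closure_def dest: sym)
  moreover have "trans ?P"
    by (rule transI) (rule trans)
  ultimately have "equiv UNIV ?P"
    by (simp add: equiv_def)
  then show ?thesis
    unfolding is_congruence_def using plus times by blast
qed

lemma Rab_I: "(a * x + b * y + z, b * x + a * y + z) \<in> Rab a b"
  unfolding Rab_def by blast

lemma Rab_E:
  assumes "(u, v) \<in> Rab a b"
  obtains x y z where "u = a * x + b * y + z" "v = b * x + a * y + z"
  using assms unfolding Rab_def by blast

lemma pair_in_Rab: "(a, b) \<in> Rab a b"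
  using Rab_I[of a 1 b 0 0] by simp

lemma Rab_refl: "(u, u) \<in> Rab a b"
  using Rab_I[of a 0 b 0 u] by simp

lemma Rab_sym:
  assumes "(u, v) \<in> Rab a b"
  shows "(v, u) \<in> Rab a b"
proof -
  obtain x y z where "u = a * x + b * y + z" "v = b * x + a * y + z"
    using assms by (rule Rab_E)
  then show ?thesis
    using Rab_I[of a y b x z] by (simp add: ac_simps)
qed

lemma Rab_add:
  assumes "(u, v) \<in> Rab a b" "(u', v') \<in> Rab a b"
  shows "(u + u', v + v') \<in> Rab a b"
proof -
  obtain x y z where "u = a * x + b * y + z" "v = b * x + a * y + z"
    using assms(1) by (rule Rab_E)
  moreover obtain x' y' z' where "u' = a * x' + b * y' + z'" "v' = b * x' + a * y' + z'"
    using assms(2) by (rule Rab_E)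
  ultimately show ?thesis
    using Rab_I[of a "x + x'" b "y + y'" "z + z'"] by (simp add: algebra_simps)
qed

lemma Rab_smult:
  assumes "(u, v) \<in> Rab a b"
  shows "(t * u, t * v) \<in> Rab a b"
proof -
  obtain x y z where "u = a * x + b * y + z" "v = b * x + a * y + z"
    using assms by (rule Rab_E)
  then show ?thesis
    using Rab_I[of a "t * x" b "t * y" "t * z"] by (simp add: algebra_simps)
qed

lemma Rab_subset_congruence:
  assumes cong: "is_congruence R" and ab: "(a, b) \<in> R"
  shows "Rab a b \<subseteq> R"
proof
  fix p assume "p \<in> Rab a b"
  then obtain x y z where p: "p = (a * x + b * y + z, b * x + a * y + z)"
    unfolding Rab_def by blast
  have "(a * x, b * x) \<in> R"
    using congruence_mult[OF cong ab congruence_refl[OF cong]] .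
  moreover have "(b * y, a * y) \<in> R"
    using congruence_mult[OF cong congruence_sym[OF cong ab] congruence_refl[OF cong]] .
  ultimately have "(a * x + b * y, b * x + a * y) \<in> R"
    by (rule congruence_add[OF cong])
  then show "p \<in> R"
    unfolding p by (rule congruence_add[OF cong _ congruence_refl[OF cong]])
qed

theorem proposition2p21:
  fixes a b :: "'a::comm_semiring_1"
  defines "\<rho> \<equiv> gen_congruence {(a, b)}"
  shows "is_congruence (plus_closure (Rab a b))
    \<and> Rab a b \<subseteq> \<rho> \<and> \<rho> \<subseteq> plus_closure (Rab a b)
    \<and> plus_closure (Rab a b) \<subseteq> plus_closure \<rho>"
proof (intro conjI)
  show cong: "is_congruence (plus_closure (Rab a b))"
    by (rule is_congruence_plus_closure[OF Rab_refl Rab_sym Rab_add Rab_smult])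
  show Rab_sub: "Rab a b \<subseteq> \<rho>"
    unfolding \<rho>_def by (rule subset_gen_congruenceI) (simp add: Rab_subset_congruence)
  have "(a, b) \<in> plus_closure (Rab a b)"
    using pair_in_Rab subset_plus_closure by blast
  with cong show "\<rho> \<subseteq> plus_closure (Rab a b)"
    unfolding \<rho>_def by (simp add: gen_congruence_least)
  show "plus_closure (Rab a b) \<subseteq> plus_closure \<rho>"
    using Rab_sub by (rule plus_closure_mono)
qed

end
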